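(* Let $T$ be a graph on a countably infinite set $X$ with bounded degree, $\mu$ a $T$-invariant mean on $X$ with associated measure $\bar\mu$ on $\beta X$, and let $W$ be a subgraph of $T$ with $V(W)=X$. Then for every integer $l\ge1$, the $\mu$-measure of the set of points $x\in X$ whose connected component in $W$ has exactly $l$ vertices equals the $\bar\mu$-measure of the set of points $\omega\in\beta X$ whose connected component in $\mathcal G(W)$ has exactly $l$ vertices.
   Context: A mean on $X$ is a finitely additive $\mu:2^X\to[0,1]$ with $\mu(X)=1$; $\bar\mu$ is the unique regular Borel probability on $\beta X$ (the ultrafilters on $X$) with $\bar\mu(U_A)=\mu(A)$ where $U_A=\{\omega:A\in\omega\}$. A mean is $T$-invariant if it is invariant under some (equivalently every) action of a finitely generated group on $X$ whose Schreier graph with respect to a finite symmetric generating set is $T$ (Schreier graph: edge $\{x,y\}$ when $x\neq y$ and $s(x)=y$ for a generator $s$). For a bounded degree graph $W$ on $X$, $\mathcal G(W)$ is the graph on $\beta X$ with an edge $\{\omega,\omega'\}$ when $\omega\neq\omega'$ and $\tilde s(\omega)=\omega'$ for a generator $s$ of some finitely generated group action on $X$ with Schreier graph $W$, where $\tilde s(\omega)=\{s(A):A\in\omega\}$; this does not depend on the chosen action. *)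

theory Defs
  imports "HOL-Probability.Probability"
begin

definition is_graph :: "('a \<Rightarrow> 'a \<Rightarrow> bool) \<Rightarrow> bool" where
  "is_graph E \<longleftrightarrow> (\<forall>x y. E x y \<longrightarrow> E y x) \<and> (\<forall>x. \<not> E x x)"

definition bounded_degree :: "('a \<Rightarrow> 'a \<Rightarrow> bool) \<Rightarrow> bool" where
  "bounded_degree E \<longleftrightarrow> (\<exists>d::nat. \<forall>x. finite {y. E x y} \<and> card {y. E x y} \<le> d)"

definition component :: "('a \<Rightarrow> 'a \<Rightarrow> bool) \<Rightarrow> 'a \<Rightarrow> 'a set" where
  "component E x = {y. E\<^sup>*\<^sup>* x y}"

definition comp_size_eq :: "('a \<Rightarrow> 'a \<Rightarrow> bool) \<Rightarrow> nat \<Rightarrow> 'a \<Rightarrow> bool" where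
  "comp_size_eq E l x \<longleftrightarrow> finite (component E x) \<and> card (component E x) = l"

text \<open>A finitely generated group acting on X with finite symmetric generating set is
  represented by the finite, inverse-closed set S of bijections of X given by the generators.\<close>

definition gen_action :: "('a \<Rightarrow> 'a) set \<Rightarrow> bool" where
  "gen_action S \<longleftrightarrow> finite S \<and> (\<forall>s\<in>S. bij s) \<and> (\<forall>s\<in>S. inv s \<in> S)"

definition schreier :: "('a \<Rightarrow> 'a) set \<Rightarrow> 'a \<Rightarrow> 'a \<Rightarrow> bool" where
  "schreier S x y \<longleftrightarrow> x \<noteq> y \<and> (\<exists>s\<in>S. s x = y)"

definition is_mean :: "('a set \<Rightarrow> real) \<Rightarrow> bool" where
  "is_mean \<mu> \<longleftrightarrow> (\<forall>A. 0 \<le> \<mu> A \<and> \<mu> A \<le> 1) \<and> \<mu> UNIV = 1 \<and>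
     (\<forall>A B. A \<inter> B = {} \<longrightarrow> \<mu> (A \<union> B) = \<mu> A + \<mu> B)"

definition invariant_mean :: "('a \<Rightarrow> 'a \<Rightarrow> bool) \<Rightarrow> ('a set \<Rightarrow> real) \<Rightarrow> bool" where
  "invariant_mean T \<mu> \<longleftrightarrow> is_mean \<mu> \<and>
     (\<exists>S. gen_action S \<and> schreier S = T \<and> (\<forall>s\<in>S. \<forall>A. \<mu> (s ` A) = \<mu> A))"

definition is_ultrafilter :: "'a set set \<Rightarrow> bool" where
  "is_ultrafilter \<omega> \<longleftrightarrow> UNIV \<in> \<omega> \<and> {} \<notin> \<omega> \<and>
     (\<forall>A B. A \<in> \<omega> \<and> A \<subseteq> B \<longrightarrow> B \<in> \<omega>) \<and>
     (\<forall>A B. A \<in> \<omega> \<and> B \<in> \<omega> \<longrightarrow> A \<inter> B \<in> \<omega>) \<and>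
     (\<forall>A. A \<in> \<omega> \<or> - A \<in> \<omega>)"

definition betaX :: "'a set set set" where
  "betaX = {\<omega>. is_ultrafilter \<omega>}"

definition UA :: "'a set \<Rightarrow> 'a set set set" where
  "UA A = {\<omega> \<in> betaX. A \<in> \<omega>}"

definition beta_top :: "'a set set topology" where
  "beta_top = topology_generated_by (range UA)"

definition beta_borel_sets :: "'a set set set set" where
  "beta_borel_sets = sigma_sets betaX {U. openin beta_top U}"

definition regular_on :: "'b topology \<Rightarrow> 'b measure \<Rightarrow> bool" where
  "regular_on \<tau> M \<longleftrightarrow> (\<forall>B \<in> sets M.
      measure M B = (SUP K \<in> {K. compactin \<tau> K \<and> K \<subseteq> B}. measure M K) \<and>
      measure M B = (INF U \<in> {U. openin \<tau> U \<and> B \<subseteq> U}. measure M U))"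

definition mean_extension :: "('a set \<Rightarrow> real) \<Rightarrow> 'a set set measure \<Rightarrow> bool" where
  "mean_extension \<mu> M \<longleftrightarrow> prob_space M \<and> space M = betaX \<and> sets M = beta_borel_sets \<and>
     regular_on beta_top M \<and> (\<forall>A. measure M (UA A) = \<mu> A)"

definition tilde :: "('a \<Rightarrow> 'a) \<Rightarrow> 'a set set \<Rightarrow> 'a set set" where
  "tilde s \<omega> = {s ` A | A. A \<in> \<omega>}"

definition GW :: "('a \<Rightarrow> 'a \<Rightarrow> bool) \<Rightarrow> 'a set set \<Rightarrow> 'a set set \<Rightarrow> bool" where
  "GW W \<omega> \<omega>' \<longleftrightarrow> \<omega> \<in> betaX \<and> \<omega>' \<in> betaX \<and> \<omega> \<noteq> \<omega>' \<and>
     (\<exists>S. gen_action S \<and> schreier S = W \<and> (\<exists>s\<in>S. tilde s \<omega> = \<omega>'))"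

end

theory Submission
  imports Defs
begin

(* The component of an ultrafilter
   \<omega> in G(W) has exactly l points iff the set A of points of X whose W-component has exactly
   l points belongs to \<omega>; that is, the set in question is the basic clopen set U_A.  Hence it
   is Borel and its measure under mu-bar is mu(A) by the defining property of mu-bar.

   So \<omega> is mapped to distinct ultrafilters by
      finitely many bijections iff the points are mapped to distinct points on a set of \<omega>.
   3. Every bounded degree graph is a Schreier graph (generators: involutions swapping
      the edges of a fixed pair of colours in a distance-two colouring).
   4. Components in W and in G(W) are orbits under words in the generators; k distinct
      points of a W-orbit are reached by words of length at most k, a finite set of words.
      Combining 2 and 4 gives the statement for "at least k points", and "exactly l" follows. *)

lemma ultrafilter_mono: "is_ultrafilter \<omega> \<Longrightarrow> A \<in> \<omega> \<Longrightarrow> A \<subseteq> B \<Longrightarrow> B \<in> \<omega>"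
  unfolding is_ultrafilter_def by blast

lemma ultrafilter_Int_iff: "is_ultrafilter \<omega> \<Longrightarrow> A \<inter> B \<in> \<omega> \<longleftrightarrow> A \<in> \<omega> \<and> B \<in> \<omega>"
  unfolding is_ultrafilter_def by (metis Int_lower1 Int_lower2)

lemma ultrafilter_Compl_iff: "is_ultrafilter \<omega> \<Longrightarrow> - A \<in> \<omega> \<longleftrightarrow> A \<notin> \<omega>"
  unfolding is_ultrafilter_def by (metis Compl_disjoint)

lemma ultrafilter_finite_UN:
  assumes uf: "is_ultrafilter \<omega>" and "finite I" and "(\<Union>i\<in>I. F i) \<in> \<omega>"
  shows "\<exists>i\<in>I. F i \<in> \<omega>"
  using assms(2,3)
proof (induction I rule: finite_induct)
  case empty
  then show ?case using uf unfolding is_ultrafilter_def by simp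
next
  case (insert i I)
  show ?case
  proof (rule ccontr)
    assume "\<not> ?case"
    then have "- F i \<inter> - (\<Union>j\<in>I. F j) \<in> \<omega>"
      using insert.IH uf ultrafilter_Compl_iff ultrafilter_Int_iff by blast
    then have "- (\<Union>j\<in>insert i I. F j) \<in> \<omega>" by (simp add: Int_commute)
    then show False using insert.prems uf ultrafilter_Compl_iff by blast
  qed
qed

lemma ultrafilter_finite_INT_iff:
  assumes uf: "is_ultrafilter \<omega>" and "finite I"
  shows "(\<Inter>i\<in>I. F i) \<in> \<omega> \<longleftrightarrow> (\<forall>i\<in>I. F i \<in> \<omega>)"
  using assms(2)
proof (induction I rule: finite_induct)
  case empty
  then show ?case using uf unfolding is_ultrafilter_def by simp
next
  case (insert i I)
  then show ?case using ultrafilter_Int_iff[OF uf, of "F i"] by simp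
qed

lemma tilde_vimage: "bij s \<Longrightarrow> tilde s \<omega> = {A. s -` A \<in> \<omega>}"
  unfolding tilde_def
  by (auto simp: bij_is_inj inj_vimage_image_eq bij_is_surj surj_image_vimage_eq)
     (metis bij_is_surj surj_image_vimage_eq)

lemma tilde_in_betaX:
  assumes s: "bij s" and \<omega>: "\<omega> \<in> betaX"
  shows "tilde s \<omega> \<in> betaX"
proof -
  have uf: "is_ultrafilter \<omega>" using \<omega> unfolding betaX_def by simp
  have "is_ultrafilter {A. s -` A \<in> \<omega>}"
    unfolding is_ultrafilter_def
  proof (intro conjI allI impI)
    fix A B
    show "A \<in> {A. s -` A \<in> \<omega>} \<and> A \<subseteq> B \<Longrightarrow> B \<in> {A. s -` A \<in> \<omega>}"
      using ultrafilter_mono[OF uf, of "s -` A" "s -` B"] by auto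
    show "A \<in> {A. s -` A \<in> \<omega>} \<and> B \<in> {A. s -` A \<in> \<omega>} \<Longrightarrow> A \<inter> B \<in> {A. s -` A \<in> \<omega>}"
      using ultrafilter_Int_iff[OF uf, of "s -` A" "s -` B"] by simp
    show "A \<in> {A. s -` A \<in> \<omega>} \<or> - A \<in> {A. s -` A \<in> \<omega>}"
      using ultrafilter_Compl_iff[OF uf, of "s -` A"] by (simp add: vimage_Compl)
  qed (use uf in \<open>auto simp: is_ultrafilter_def\<close>)
  then show ?thesis using s unfolding betaX_def by (simp add: tilde_vimage)
qed

lemma tilde_comp: "bij s \<Longrightarrow> bij t \<Longrightarrow> tilde s (tilde t \<omega>) = tilde (s \<circ> t) \<omega>"
  using bij_comp[of t s] by (simp add: tilde_vimage vimage_comp)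

lemma tilde_id [simp]: "tilde id \<omega> = \<omega>"
  by (simp add: tilde_vimage)

lemma tilde_cong:
  assumes uf: "is_ultrafilter \<omega>" and "bij u" "bij v" and agree: "{x. u x = v x} \<in> \<omega>"
  shows "tilde u \<omega> = tilde v \<omega>"
proof -
  have "u -` A \<in> \<omega> \<longleftrightarrow> v -` A \<in> \<omega>" for A
  proof -
    have "u -` A \<inter> {x. u x = v x} = v -` A \<inter> {x. u x = v x}" by auto
    then show ?thesis using ultrafilter_Int_iff[OF uf] agree by metis
  qed
  then show ?thesis using assms by (simp add: tilde_vimage)
qed

lemma free_colour:
  fixes f :: "'b \<Rightarrow> nat" and N :: "'b set"
  assumes "finite N" and "card N \<le> d"
  shows "\<exists>k\<le>d. k \<notin> f ` N"
proof (rule ccontr)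
  assume "\<not> ?thesis"
  then have "{0..d} \<subseteq> f ` N" by auto
  then have "card {0..d} \<le> card (f ` N)" using assms(1) by (intro card_mono) auto
  also have "\<dots> \<le> card N" using assms(1) by (rule card_image_le)
  finally show False using assms(2) by simp
qed

primrec greedy_colour :: "('a::countable \<Rightarrow> 'a \<Rightarrow> bool) \<Rightarrow> nat \<Rightarrow> 'a \<Rightarrow> nat" where
  "greedy_colour D 0 = (\<lambda>_. 0)"
| "greedy_colour D (Suc n) = (\<lambda>x. if to_nat x = n
      then (LEAST k. \<forall>y. D x y \<and> to_nat y < n \<longrightarrow> greedy_colour D n y \<noteq> k)
      else greedy_colour D n x)"

lemma greedy_colour_stable:
  "Suc (to_nat x) \<le> m \<Longrightarrow> greedy_colour D m x = greedy_colour D (Suc (to_nat x)) x"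
  by (induction m) (auto simp: le_Suc_eq)

lemma greedy_colouring:
  fixes D :: "'a::countable \<Rightarrow> 'a \<Rightarrow> bool"
  assumes sym: "\<And>x y. D x y \<Longrightarrow> D y x" and irrefl: "\<And>x. \<not> D x x"
    and deg: "\<And>x. finite {y. D x y} \<and> card {y. D x y} \<le> d"
  shows "\<exists>c::'a \<Rightarrow> nat. (\<forall>x. c x \<le> d) \<and> (\<forall>x y. D x y \<longrightarrow> c x \<noteq> c y)"
proof -
  define c where "c x = greedy_colour D (Suc (to_nat x)) x" for x
  have earlier: "greedy_colour D (to_nat x) y = c y" if "to_nat y < to_nat x" for x y :: 'a
    unfolding c_def using greedy_colour_stable[of y "to_nat x" D] that by simp
  let ?avoids = "\<lambda>x k. \<forall>y. D x y \<and> to_nat y < to_nat x \<longrightarrow> c y \<noteq> k"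
  have c_least: "c x = (LEAST k. ?avoids x k)" for x
  proof -
    have "c x = (LEAST k. \<forall>y. D x y \<and> to_nat y < to_nat x \<longrightarrow> greedy_colour D (to_nat x) y \<noteq> k)"
      unfolding c_def by simp
    also have "(\<lambda>k. \<forall>y. D x y \<and> to_nat y < to_nat x \<longrightarrow> greedy_colour D (to_nat x) y \<noteq> k) = ?avoids x"
      using earlier by auto
    finally show ?thesis .
  qed
  have c_avoids: "?avoids x (c x) \<and> c x \<le> d" for x
  proof -
    obtain k where "k \<le> d" "k \<notin> c ` {y. D x y}"
      using free_colour deg by blast
    then have k: "?avoids x k" by auto
    have "?avoids x (c x)" unfolding c_least[of x] by (rule LeastI) (rule k)
    moreover have "c x \<le> k" unfolding c_least[of x] by (rule Least_le) (rule k)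
    ultimately show ?thesis using \<open>k \<le> d\<close> by simp
  qed
  have "c x \<noteq> c y" if "D x y" for x y
  proof -
    have "to_nat x \<noteq> to_nat y" using irrefl that by auto
    then consider "to_nat y < to_nat x" | "to_nat x < to_nat y" by linarith
    then show ?thesis using c_avoids[of x] c_avoids[of y] that sym by cases metis+
  qed
  then show ?thesis using c_avoids by blast
qed

text \<open>Its orbit graph has degree at
  most 2, so a proper 3-colouring splits the moved points into three pieces B with
  B \<inter> f ` B = {}; the piece lying in \<omega> witnesses that f does not fix \<omega>.\<close>

lemma ultrafilter_moved_by_bij:
  fixes f :: "'a::countable \<Rightarrow> 'a"
  assumes uf: "is_ultrafilter \<omega>" and f: "bij f" and moved: "{x. f x \<noteq> x} \<in> \<omega>"
  shows "tilde f \<omega> \<noteq> \<omega>"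
proof
  assume fixed: "tilde f \<omega> = \<omega>"
  define R where "R x y \<longleftrightarrow> x \<noteq> y \<and> (f x = y \<or> f y = x)" for x y
  have "finite {y. R x y} \<and> card {y. R x y} \<le> 2" for x
  proof -
    have sub: "{y. R x y} \<subseteq> {f x, inv f x}"
      unfolding R_def using f by (auto simp: bij_inv_eq_iff)
    have "card {f x, inv f x} \<le> 2" by (simp add: card_insert_if)
    then show ?thesis using card_mono[OF _ sub] finite_subset[OF sub] by simp
  qed
  moreover have "R x y \<Longrightarrow> R y x" "\<not> R x x" for x y unfolding R_def by auto
  ultimately obtain c :: "'a \<Rightarrow> nat" where c_le: "\<And>x. c x \<le> 2" and c_proper: "\<And>x y. R x y \<Longrightarrow> c x \<noteq> c y"
    using greedy_colouring[of R 2] by blast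
  have "{x. f x \<noteq> x} = (\<Union>k\<in>{0..2::nat}. {x. f x \<noteq> x \<and> c x = k})" using c_le by auto
  then have "\<exists>k\<in>{0..2::nat}. {x. f x \<noteq> x \<and> c x = k} \<in> \<omega>"
    using moved by (intro ultrafilter_finite_UN[OF uf]) auto
  then obtain k where B: "{x. f x \<noteq> x \<and> c x = k} \<in> \<omega>" (is "?B \<in> \<omega>") by blast
  have "f -` (f ` ?B) = ?B" using f by (simp add: bij_is_inj inj_vimage_image_eq)
  then have "f ` ?B \<in> \<omega>"
    using B fixed tilde_vimage[OF f, of \<omega>] by auto
  then have "?B \<inter> f ` ?B \<in> \<omega>"
    using B ultrafilter_Int_iff[OF uf] by blast
  then have "?B \<inter> f ` ?B \<noteq> {}"
    using uf unfolding is_ultrafilter_def by metis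
  then obtain y where "y \<in> ?B" "f y \<in> ?B" by blast
  then have "R y (f y)" "c y = c (f y)" unfolding R_def by auto
  then show False using c_proper by blast
qed

lemma tilde_eq_iff:
  fixes u v :: "'a::countable \<Rightarrow> 'a"
  assumes uf: "is_ultrafilter \<omega>" and u: "bij u" and v: "bij v"
  shows "tilde u \<omega> = tilde v \<omega> \<longleftrightarrow> {x. u x = v x} \<in> \<omega>"
proof
  assume eq: "tilde u \<omega> = tilde v \<omega>"
  show "{x. u x = v x} \<in> \<omega>"
  proof (rule ccontr)
    assume "{x. u x = v x} \<notin> \<omega>"
    then have "- {x. u x = v x} \<in> \<omega>" using ultrafilter_Compl_iff[OF uf] by blast
    moreover have "- {x. u x = v x} = {x. (inv v \<circ> u) x \<noteq> x}"
      using v by (auto simp: bij_is_inj inv_f_f) (metis bij_inv_eq_iff)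
    moreover have "bij (inv v \<circ> u)" using u v by (simp add: bij_comp bij_imp_bij_inv)
    moreover have "tilde (inv v \<circ> u) \<omega> = \<omega>"
    proof -
      have "tilde (inv v \<circ> u) \<omega> = tilde (inv v) (tilde v \<omega>)"
        using tilde_comp[of "inv v" u \<omega>] eq u v by (simp add: bij_imp_bij_inv)
      also have "\<dots> = tilde id \<omega>"
        using tilde_comp[of "inv v" v \<omega>] v by (simp add: bij_imp_bij_inv bij_is_inj)
      finally show ?thesis by simp
    qed
    ultimately show False using ultrafilter_moved_by_bij[OF uf] by metis
  qed
qed (rule tilde_cong[OF uf u v])

lemma ultrafilter_distinct_iff:
  fixes fs :: "('a::countable \<Rightarrow> 'a) list"
  assumes uf: "is_ultrafilter \<omega>" and bij: "\<forall>f\<in>set fs. bij f"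
  shows "{x. distinct (map (\<lambda>f. f x) fs)} \<in> \<omega> \<longleftrightarrow> distinct (map (\<lambda>f. tilde f \<omega>) fs)"
  using bij
proof (induction fs)
  case Nil
  then show ?case using uf unfolding is_ultrafilter_def by simp
next
  case (Cons f fs)
  have split: "{x. distinct (map (\<lambda>f. f x) (f # fs))} =
      (\<Inter>g\<in>set fs. - {x. f x = g x}) \<inter> {x. distinct (map (\<lambda>f. f x) fs)}" by auto
  have "(\<Inter>g\<in>set fs. - {x. f x = g x}) \<in> \<omega> \<longleftrightarrow> (\<forall>g\<in>set fs. tilde f \<omega> \<noteq> tilde g \<omega>)"
    using Cons.prems by (simp add: ultrafilter_finite_INT_iff[OF uf] ultrafilter_Compl_iff[OF uf]
        tilde_eq_iff[OF uf])
  then show ?case unfolding split ultrafilter_Int_iff[OF uf] using Cons by auto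
qed

definition distance_two_colouring :: "('a \<Rightarrow> 'a \<Rightarrow> bool) \<Rightarrow> ('a \<Rightarrow> nat) \<Rightarrow> bool" where
  "distance_two_colouring W c \<longleftrightarrow>
     (\<forall>x y. W x y \<longrightarrow> c x \<noteq> c y) \<and> (\<forall>x y z. W x y \<and> W x z \<and> y \<noteq> z \<longrightarrow> c y \<noteq> c z)"

text \<open>For colours i, j, the map exchanging the endpoints of every edge coloured {i, j}; under a
  distance-two colouring such edges form a matching, so this is an involution.\<close>

definition swap_along :: "('a \<Rightarrow> 'a \<Rightarrow> bool) \<Rightarrow> ('a \<Rightarrow> nat) \<Rightarrow> nat \<Rightarrow> nat \<Rightarrow> 'a \<Rightarrow> 'a" where
  "swap_along W c i j x =
     (if \<exists>y. W x y \<and> {c x, c y} = {i, j} then THE y. W x y \<and> {c x, c y} = {i, j} else x)"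

lemma swap_along_edge:
  assumes c: "distance_two_colouring W c" and xy: "W x y" and ij: "{c x, c y} = {i, j}"
  shows "swap_along W c i j x = y"
proof -
  have unique: "y' = y" if xy': "W x y'" "{c x, c y'} = {i, j}" for y'
  proof -
    have "c x \<noteq> c y" "c x \<noteq> c y'" using c xy xy' unfolding distance_two_colouring_def by blast+
    moreover have "c y \<in> {c x, c y'}" unfolding xy'(2) ij[symmetric] by simp
    ultimately have "c y = c y'" by auto
    then show ?thesis using c xy xy' unfolding distance_two_colouring_def by blast
  qed
  have "swap_along W c i j x = (THE y. W x y \<and> {c x, c y} = {i, j})"
    unfolding swap_along_def using xy ij by (intro if_P) blast
  also have "\<dots> = y" using xy ij unique by (intro the_equality) blast+
  finally show ?thesis .
qed

lemma swap_along_moves_along_edge: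
  assumes c: "distance_two_colouring W c" and moved: "swap_along W c i j x \<noteq> x"
  shows "W x (swap_along W c i j x)"
proof -
  have "\<exists>y. W x y \<and> {c x, c y} = {i, j}"
  proof (rule ccontr)
    assume "\<not> ?thesis"
    then have "swap_along W c i j x = x" unfolding swap_along_def by (rule if_not_P)
    then show False using moved by contradiction
  qed
  then obtain y where "W x y" "{c x, c y} = {i, j}" by blast
  then have "swap_along W c i j x = y" by (rule swap_along_edge[OF c])
  then show ?thesis using \<open>W x y\<close> by simp
qed

lemma swap_along_involution:
  assumes sym: "\<And>x y. W x y \<Longrightarrow> W y x" and c: "distance_two_colouring W c"
  shows "swap_along W c i j (swap_along W c i j x) = x"
proof (cases "\<exists>y. W x y \<and> {c x, c y} = {i, j}")
  case True
  then obtain y where xy: "W x y" "{c x, c y} = {i, j}" by blast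
  have "{c y, c x} = {i, j}" using insert_commute[of "c y" "c x" "{}"] xy(2) by (rule trans)
  then have "swap_along W c i j y = x" using sym[OF xy(1)] by (intro swap_along_edge[OF c])
  moreover have "swap_along W c i j x = y" using xy by (rule swap_along_edge[OF c])
  ultimately show ?thesis by simp
next
  case False
  then have "swap_along W c i j x = x" unfolding swap_along_def by (rule if_not_P)
  then show ?thesis by simp
qed

lemma square_graph_degree:
  assumes deg: "\<And>x. finite {y. W x y} \<and> card {y. W x y} \<le> d"
  shows "finite {y. x \<noteq> y \<and> (W x y \<or> (\<exists>z. W x z \<and> W z y))} \<and>
         card {y. x \<noteq> y \<and> (W x y \<or> (\<exists>z. W x z \<and> W z y))} \<le> d + d * d"
proof -
  let ?N = "\<lambda>z. {y. W z y}"
  have sub: "{y. x \<noteq> y \<and> (W x y \<or> (\<exists>z. W x z \<and> W z y))} \<subseteq> ?N x \<union> (\<Union>z\<in>?N x. ?N z)" by blast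
  have fin: "finite (?N x \<union> (\<Union>z\<in>?N x. ?N z))" using deg by auto
  have "card (\<Union>z\<in>?N x. ?N z) \<le> (\<Sum>z\<in>?N x. card (?N z))" using deg by (intro card_UN_le) auto
  also have "\<dots> \<le> card (?N x) * d" using sum_bounded_above[of "?N x" "\<lambda>z. card (?N z)" d] deg by auto
  also have "\<dots> \<le> d * d" using deg[of x] by simp
  finally have "card (?N x \<union> (\<Union>z\<in>?N x. ?N z)) \<le> d + d * d"
    using card_Un_le[of "?N x" "\<Union>z\<in>?N x. ?N z"] deg[of x] by linarith
  then show ?thesis using card_mono[OF fin sub] finite_subset[OF sub fin] by linarith
qed

text \<open>A bounded degree graph on a countable set has a distance-two colouring with finitely many
  colours: colour the graph of distance at most two greedily.\<close>

lemma distance_two_colouring_exists: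
  fixes W :: "'a::countable \<Rightarrow> 'a \<Rightarrow> bool"
  assumes W: "is_graph W" and deg: "\<And>x. finite {y. W x y} \<and> card {y. W x y} \<le> d"
  shows "\<exists>c. (\<forall>x. c x \<le> d + d * d) \<and> distance_two_colouring W c"
proof -
  define D where "D x y \<longleftrightarrow> x \<noteq> y \<and> (W x y \<or> (\<exists>z. W x z \<and> W z y))" for x y
  have W_sym: "W x y \<Longrightarrow> W y x" and W_irrefl: "\<not> W x x" for x y
    using W unfolding is_graph_def by blast+
  have "D x y \<Longrightarrow> D y x" for x y unfolding D_def using W_sym by blast
  moreover have "\<not> D x x" for x unfolding D_def by simp
  moreover have "finite {y. D x y} \<and> card {y. D x y} \<le> d + d * d" for x
    unfolding D_def by (rule square_graph_degree[OF deg])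
  ultimately obtain c :: "'a \<Rightarrow> nat"
    where c_le: "\<forall>x. c x \<le> d + d * d" and c_proper: "\<forall>x y. D x y \<longrightarrow> c x \<noteq> c y"
    using greedy_colouring[of D "d + d * d"] by blast
  have "W x y \<Longrightarrow> D x y" for x y unfolding D_def using W_irrefl by blast
  moreover have "W x y \<Longrightarrow> W x z \<Longrightarrow> y \<noteq> z \<Longrightarrow> D y z" for x y z
    unfolding D_def using W_sym by blast
  ultimately have "distance_two_colouring W c"
    unfolding distance_two_colouring_def using c_proper by blast
  then show ?thesis using c_le by blast
qed

text \<open>Every bounded degree graph on a countable set is the Schreier graph of a finitely generated
  action: the generators are the involutions swap_along W c i j for all pairs of colours.\<close>

lemma schreier_exists:
  fixes W :: "'a::countable \<Rightarrow> 'a \<Rightarrow> bool"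
  assumes W: "is_graph W" and "bounded_degree W"
  shows "\<exists>S. gen_action S \<and> schreier S = W"
proof -
  obtain d where deg: "\<And>x. finite {y. W x y} \<and> card {y. W x y} \<le> d"
    using \<open>bounded_degree W\<close> unfolding bounded_degree_def by blast
  obtain c where c_le: "\<And>x. c x \<le> d + d * d" and c: "distance_two_colouring W c"
    using distance_two_colouring_exists[OF W deg] by blast
  have W_sym: "W x y \<Longrightarrow> W y x" and W_irrefl: "\<not> W x x" for x y
    using W unfolding is_graph_def by blast+
  define S where "S = {swap_along W c i j | i j. i \<le> d + d * d \<and> j \<le> d + d * d}"
  have S_inv: "bij s \<and> inv s = s" if s_in: "s \<in> S" for s
  proof -
    obtain i j where s: "s = swap_along W c i j" using s_in unfolding S_def by blast
    have "s \<circ> s = id" unfolding s by (rule ext) (simp add: swap_along_involution[OF W_sym c])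
    then show ?thesis using o_bij[of s s] inv_unique_comp[of s s] by simp
  qed
  have "finite S" unfolding S_def by (rule finite_image_set2) simp_all
  then have "gen_action S" unfolding gen_action_def using S_inv by simp
  moreover have "schreier S = W"
  proof (intro ext iffI)
    fix x y assume "schreier S x y"
    then obtain i j where swap: "swap_along W c i j x = y" and "x \<noteq> y"
      unfolding schreier_def S_def by blast
    then have "W x (swap_along W c i j x)" by (intro swap_along_moves_along_edge[OF c]) simp
    then show "W x y" unfolding swap .
  next
    fix x y assume xy: "W x y"
    then have "swap_along W c (c x) (c y) x = y" by (rule swap_along_edge[OF c]) simp
    moreover have "swap_along W c (c x) (c y) \<in> S" unfolding S_def using c_le by blast
    ultimately show "schreier S x y" unfolding schreier_def using xy W_irrefl by blast
  qed
  ultimately show ?thesis by blast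
qed

primrec word_act :: "('a \<Rightarrow> 'a) list \<Rightarrow> 'a \<Rightarrow> 'a" where
  "word_act [] = id"
| "word_act (s # w) = s \<circ> word_act w"

lemma word_act_bij: "gen_action S \<Longrightarrow> set w \<subseteq> S \<Longrightarrow> bij (word_act w)"
  by (induction w) (auto simp: gen_action_def intro: bij_comp)

lemma component_schreier:
  assumes "schreier S = W"
  shows "component W x = (\<lambda>w. word_act w x) ` {w. set w \<subseteq> S}"
proof
  show "component W x \<subseteq> (\<lambda>w. word_act w x) ` {w. set w \<subseteq> S}"
  proof
    fix y assume "y \<in> component W x"
    then have "W\<^sup>*\<^sup>* x y" unfolding component_def by simp
    then show "y \<in> (\<lambda>w. word_act w x) ` {w. set w \<subseteq> S}"
    proof (induction rule: rtranclp_induct)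
      case base
      show ?case by (rule image_eqI[of _ _ "[]"]) auto
    next
      case (step y z)
      then obtain w where w: "set w \<subseteq> S" "y = word_act w x" by blast
      obtain t where t: "t \<in> S" "t y = z" using step(2) assms unfolding schreier_def by blast
      show ?case by (rule image_eqI[of _ _ "t # w"]) (use w t in auto)
    qed
  qed
next
  have "W\<^sup>*\<^sup>* x (word_act w x)" if "set w \<subseteq> S" for w
    using that
  proof (induction w)
    case (Cons t w)
    then have "W\<^sup>*\<^sup>* x (word_act w x)" "t \<in> S" by auto
    moreover have "t (word_act w x) = word_act w x \<or> W (word_act w x) (t (word_act w x))"
      using \<open>t \<in> S\<close> assms unfolding schreier_def by auto
    ultimately show ?case by auto
  qed simp
  then show "(\<lambda>w. word_act w x) ` {w. set w \<subseteq> S} \<subseteq> component W x"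
    unfolding component_def by auto
qed

text \<open>An edge of GW W can be realised by a generator of any fixed action with Schreier graph W:
  the generator s of the given action agrees with some generator of the fixed action, or with
  the identity, on a set of the ultrafilter.\<close>

lemma GW_step:
  fixes W :: "'a::countable \<Rightarrow> 'a \<Rightarrow> bool"
  assumes S: "gen_action S" "schreier S = W" and edge: "GW W a b"
  shows "\<exists>t\<in>S. tilde t a = b"
proof -
  obtain S' s where S': "gen_action S'" "schreier S' = W" "s \<in> S'" "tilde s a = b"
    and ab: "a \<in> betaX" "a \<noteq> b" using edge unfolding GW_def by blast
  have uf: "is_ultrafilter a" using ab unfolding betaX_def by simp
  have s: "bij s" using S' unfolding gen_action_def by blast
  have "s x \<in> insert x {t x | t. t \<in> S}" for x
  proof (cases "s x = x")
    case False
    then have "schreier S' x (s x)" using S'(3) unfolding schreier_def by auto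
    then have "schreier S x (s x)" using S'(2) S(2) by simp
    then show ?thesis unfolding schreier_def by auto
  qed simp
  then have "(\<Union>t\<in>insert id S. {x. s x = t x}) = UNIV" by auto
  then have "(\<Union>t\<in>insert id S. {x. s x = t x}) \<in> a"
    using uf unfolding is_ultrafilter_def by simp
  moreover have "finite (insert id S)" using S unfolding gen_action_def by simp
  ultimately obtain t where t: "t \<in> insert id S" "{x. s x = t x} \<in> a"
    using ultrafilter_finite_UN[OF uf] by blast
  have "bij t" using t(1) S unfolding gen_action_def by auto
  then have "tilde s a = tilde t a" using tilde_cong[OF uf s _ t(2)] by blast
  then show ?thesis using t(1) S'(4) ab(2) by auto
qed

lemma component_GW:
  fixes W :: "'a::countable \<Rightarrow> 'a \<Rightarrow> bool"
  assumes S: "gen_action S" "schreier S = W" and \<omega>: "\<omega> \<in> betaX"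
  shows "component (GW W) \<omega> = (\<lambda>w. tilde (word_act w) \<omega>) ` {w. set w \<subseteq> S}"
proof
  show "component (GW W) \<omega> \<subseteq> (\<lambda>w. tilde (word_act w) \<omega>) ` {w. set w \<subseteq> S}"
  proof
    fix y assume "y \<in> component (GW W) \<omega>"
    then have "(GW W)\<^sup>*\<^sup>* \<omega> y" unfolding component_def by simp
    then show "y \<in> (\<lambda>w. tilde (word_act w) \<omega>) ` {w. set w \<subseteq> S}"
    proof (induction rule: rtranclp_induct)
      case base
      have "\<omega> = tilde (word_act []) \<omega>" by (simp only: word_act.simps tilde_id)
      then show ?case by (rule image_eqI) simp
    next
      case (step y z)
      then obtain w where w: "set w \<subseteq> S" "y = tilde (word_act w) \<omega>" by blast
      obtain t where t: "t \<in> S" "tilde t y = z" using GW_step[OF S step(2)] by blast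
      have "bij t" using t S unfolding gen_action_def by blast
      then have "z = tilde (word_act (t # w)) \<omega>"
        using t w tilde_comp[of t "word_act w" \<omega>] word_act_bij[OF S(1) w(1)] by simp
      then show ?case by (rule image_eqI) (use w t in simp)
    qed
  qed
next
  have "(GW W)\<^sup>*\<^sup>* \<omega> (tilde (word_act w) \<omega>)" if "set w \<subseteq> S" for w
    using that
  proof (induction w)
    case (Cons t w)
    then have IH: "(GW W)\<^sup>*\<^sup>* \<omega> (tilde (word_act w) \<omega>)" and t: "t \<in> S" and w: "set w \<subseteq> S"
      by auto
    let ?y = "tilde (word_act w) \<omega>"
    have "bij t" using t S unfolding gen_action_def by blast
    then have step: "tilde (word_act (t # w)) \<omega> = tilde t ?y"
      using tilde_comp[OF _ word_act_bij[OF S(1) w]] by simp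
    have "?y \<in> betaX" using tilde_in_betaX[OF word_act_bij[OF S(1) w] \<omega>] .
    then have "tilde t ?y = ?y \<or> GW W ?y (tilde t ?y)"
      unfolding GW_def using tilde_in_betaX[OF \<open>bij t\<close>] S t by blast
    then show ?case unfolding step using IH by auto
  qed (simp only: word_act.simps tilde_id rtranclp.rtrancl_refl)
  then show "(\<lambda>w. tilde (word_act w) \<omega>) ` {w. set w \<subseteq> S} \<subseteq> component (GW W) \<omega>"
    unfolding component_def by auto
qed

definition has_at_least :: "nat \<Rightarrow> 'b set \<Rightarrow> bool" where
  "has_at_least k C \<longleftrightarrow> (\<exists>F\<subseteq>C. finite F \<and> card F = k)"

lemma has_at_least_iff_card: "has_at_least k C \<longleftrightarrow> infinite C \<or> k \<le> card C"
proof
  assume "has_at_least k C"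
  then obtain F where "F \<subseteq> C" "finite F" "card F = k" unfolding has_at_least_def by blast
  then show "infinite C \<or> k \<le> card C" using card_mono by blast
next
  assume "infinite C \<or> k \<le> card C"
  then show "has_at_least k C" unfolding has_at_least_def
    by (metis infinite_arbitrarily_large obtain_subset_with_card_n)
qed

lemma comp_size_eq_iff:
  "comp_size_eq E l x \<longleftrightarrow> has_at_least l (component E x) \<and> \<not> has_at_least (Suc l) (component E x)"
  unfolding comp_size_eq_def has_at_least_iff_card by auto

lemma has_at_least_image:
  "has_at_least k (f ` Q) \<longleftrightarrow> (\<exists>ws. length ws = k \<and> set ws \<subseteq> Q \<and> distinct (map f ws))"
proof
  assume "has_at_least k (f ` Q)"
  then obtain F where F: "F \<subseteq> f ` Q" "finite F" "card F = k" unfolding has_at_least_def by blast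
  then obtain G where G: "G \<subseteq> Q" "inj_on f G" "f ` G = F" by (metis subset_image_inj)
  then have "finite G" "card G = k" using F by (auto simp: finite_image_iff card_image)
  then obtain ws where "distinct ws" "set ws = G" "length ws = k"
    using finite_distinct_list distinct_card by metis
  then show "\<exists>ws. length ws = k \<and> set ws \<subseteq> Q \<and> distinct (map f ws)"
    using G by (auto simp: distinct_map)
next
  assume "\<exists>ws. length ws = k \<and> set ws \<subseteq> Q \<and> distinct (map f ws)"
  then obtain ws where ws: "length ws = k" "set ws \<subseteq> Q" "distinct (map f ws)" by blast
  then have "card (set (map f ws)) = k" using distinct_card by fastforce
  then show "has_at_least k (f ` Q)" unfolding has_at_least_def using ws by (intro exI[of _ "set (map f ws)"]) auto
qed

definition word_ball :: "('a \<Rightarrow> 'a) set \<Rightarrow> nat \<Rightarrow> 'a \<Rightarrow> 'a set" where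
  "word_ball S r x = (\<lambda>w. word_act w x) ` {w. set w \<subseteq> S \<and> length w \<le> r}"

lemma word_ball_stable:
  assumes "word_ball S (Suc r) x = word_ball S r x"
  shows "word_ball S r x = (\<lambda>w. word_act w x) ` {w. set w \<subseteq> S}"
proof
  have "word_act w x \<in> word_ball S r x" if "set w \<subseteq> S" for w
    using that
  proof (induction w)
    case Nil
    show ?case unfolding word_ball_def by (rule image_eqI[of _ _ "[]"]) simp_all
  next
    case (Cons t w)
    then obtain w' where w': "set w' \<subseteq> S" "length w' \<le> r" "word_act w x = word_act w' x"
      unfolding word_ball_def by auto
    have "word_act (t # w) x = word_act (t # w') x" using w' by simp
    also have "\<dots> \<in> word_ball S (Suc r) x" unfolding word_ball_def
      by (rule image_eqI[of _ _ "t # w'"]) (use w' Cons.prems in auto)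
    finally show ?case using assms by simp
  qed
  then show "(\<lambda>w. word_act w x) ` {w. set w \<subseteq> S} \<subseteq> word_ball S r x" by auto
qed (auto simp: word_ball_def)

lemma word_ball_grows:
  assumes S: "finite S"
  shows "Suc r \<le> card (word_ball S r x) \<or> word_ball S r x = (\<lambda>w. word_act w x) ` {w. set w \<subseteq> S}"
proof (induction r)
  case 0
  have "{w. set w \<subseteq> S \<and> length w \<le> 0} = {[]}" by auto
  then show ?case unfolding word_ball_def by simp
next
  case (Suc r)
  have fin: "finite (word_ball S n x)" for n
    unfolding word_ball_def using finite_lists_length_le[OF S] by simp
  have sub: "word_ball S r x \<subseteq> word_ball S (Suc r) x" unfolding word_ball_def by auto
  show ?case
  proof (cases "word_ball S (Suc r) x = word_ball S r x")
    case True
    then show ?thesis using word_ball_stable[of S r x] by simp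
  next
    case False
    then have "card (word_ball S r x) < card (word_ball S (Suc r) x)"
      using sub fin by (intro psubset_card_mono) auto
    moreover have "word_ball S (Suc r) x \<subseteq> (\<lambda>w. word_act w x) ` {w. set w \<subseteq> S}"
      unfolding word_ball_def by auto
    then have "word_ball S r x \<noteq> (\<lambda>w. word_act w x) ` {w. set w \<subseteq> S}"
      using False sub by blast
    then have "Suc r \<le> card (word_ball S r x)" using Suc.IH by blast
    ultimately show ?thesis by simp
  qed
qed

text \<open>In particular k points of an orbit are already found within distance k, using words from a
  finite set; this is what makes the argument below finitary.\<close>

lemma has_at_least_in_word_ball:
  assumes S: "finite S" and k: "has_at_least k ((\<lambda>w. word_act w x) ` {w. set w \<subseteq> S})"
  shows "has_at_least k (word_ball S k x)"
  using word_ball_grows[OF S, of k x] k by (auto simp: has_at_least_iff_card)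

lemma ultrafilter_has_at_least_component:
  fixes W :: "'a::countable \<Rightarrow> 'a \<Rightarrow> bool"
  assumes S: "gen_action S" "schreier S = W" and \<omega>: "\<omega> \<in> betaX"
  shows "{x. has_at_least k (component W x)} \<in> \<omega> \<longleftrightarrow> has_at_least k (component (GW W) \<omega>)"
proof -
  have uf: "is_ultrafilter \<omega>" using \<omega> unfolding betaX_def by simp
  define D where "D ws = {x. distinct (map (\<lambda>w. word_act w x) ws)}" for ws :: "('a \<Rightarrow> 'a) list list"
  have component_GW_iff: "has_at_least k (component (GW W) \<omega>) \<longleftrightarrow>
      (\<exists>ws. length ws = k \<and> set ws \<subseteq> {w. set w \<subseteq> S} \<and> D ws \<in> \<omega>)"
  proof -
    have "D ws \<in> \<omega> \<longleftrightarrow> distinct (map (\<lambda>w. tilde (word_act w) \<omega>) ws)"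
      if "set ws \<subseteq> {w. set w \<subseteq> S}" for ws
      using ultrafilter_distinct_iff[OF uf, of "map word_act ws"] word_act_bij[OF S(1)] that
      unfolding D_def by (auto simp: comp_def)
    then show ?thesis unfolding component_GW[OF S \<omega>] has_at_least_image by metis
  qed
  have component_W_iff: "has_at_least k (component W x) \<longleftrightarrow>
      (\<exists>ws. length ws = k \<and> set ws \<subseteq> {w. set w \<subseteq> S} \<and> x \<in> D ws)" for x
    unfolding component_schreier[OF S(2)] has_at_least_image D_def by simp
  show ?thesis
  proof
    assume large: "{x. has_at_least k (component W x)} \<in> \<omega>"
    define L where "L = {ws. set ws \<subseteq> {w. set w \<subseteq> S \<and> length w \<le> k} \<and> length ws = k}"
    have "finite S" using S(1) unfolding gen_action_def by simp
    then have "finite L" unfolding L_def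
      by (intro finite_lists_length_eq finite_lists_length_le)
    have "{x. has_at_least k (component W x)} \<subseteq> (\<Union>ws\<in>L. D ws)"
    proof
      fix x assume "x \<in> {x. has_at_least k (component W x)}"
      then have "has_at_least k (word_ball S k x)"
        using has_at_least_in_word_ball[OF \<open>finite S\<close>] component_schreier[OF S(2)] by simp
      then show "x \<in> (\<Union>ws\<in>L. D ws)"
        unfolding word_ball_def has_at_least_image L_def D_def by blast
    qed
    then have "(\<Union>ws\<in>L. D ws) \<in> \<omega>" using ultrafilter_mono[OF uf large] by blast
    then obtain ws where "ws \<in> L" "D ws \<in> \<omega>" using ultrafilter_finite_UN[OF uf \<open>finite L\<close>] by blast
    then show "has_at_least k (component (GW W) \<omega>)" unfolding component_GW_iff L_def by blast
  next
    assume "has_at_least k (component (GW W) \<omega>)"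
    then obtain ws where ws: "length ws = k" "set ws \<subseteq> {w. set w \<subseteq> S}" "D ws \<in> \<omega>"
      unfolding component_GW_iff by blast
    then have "D ws \<subseteq> {x. has_at_least k (component W x)}" unfolding component_W_iff by blast
    then show "{x. has_at_least k (component W x)} \<in> \<omega>" using ultrafilter_mono[OF uf ws(3)] by blast
  qed
qed

lemma comp_size_eq_GW_UA:
  fixes W :: "'a::countable \<Rightarrow> 'a \<Rightarrow> bool"
  assumes S: "gen_action S" "schreier S = W"
  shows "{\<omega> \<in> betaX. comp_size_eq (GW W) l \<omega>} = UA {x. comp_size_eq W l x}"
proof -
  have "{x. comp_size_eq W l x} \<in> \<omega> \<longleftrightarrow> comp_size_eq (GW W) l \<omega>" if \<omega>: "\<omega> \<in> betaX" for \<omega>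
  proof -
    have uf: "is_ultrafilter \<omega>" using \<omega> unfolding betaX_def by simp
    have "{x. comp_size_eq W l x} =
        {x. has_at_least l (component W x)} \<inter> - {x. has_at_least (Suc l) (component W x)}"
      unfolding comp_size_eq_iff by blast
    then have "{x. comp_size_eq W l x} \<in> \<omega> \<longleftrightarrow>
        {x. has_at_least l (component W x)} \<in> \<omega> \<and> {x. has_at_least (Suc l) (component W x)} \<notin> \<omega>"
      by (simp add: ultrafilter_Int_iff[OF uf] ultrafilter_Compl_iff[OF uf])
    then show ?thesis
      unfolding comp_size_eq_iff ultrafilter_has_at_least_component[OF S \<omega>] .
  qed
  then show ?thesis unfolding UA_def by blast
qed

lemma bounded_degree_subgraph:
  assumes "bounded_degree T" and sub: "\<forall>x y. W x y \<longrightarrow> T x y"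
  shows "bounded_degree W"
proof -
  obtain d where deg: "\<And>x. finite {y. T x y} \<and> card {y. T x y} \<le> d"
    using assms(1) unfolding bounded_degree_def by blast
  have "finite {y. W x y} \<and> card {y. W x y} \<le> d" for x
  proof -
    have "{y. W x y} \<subseteq> {y. T x y}" using sub by blast
    then show ?thesis using deg[of x] card_mono finite_subset by (metis le_trans)
  qed
  then show ?thesis unfolding bounded_degree_def by blast
qed

lemma UA_in_sets: "mean_extension \<mu> M \<Longrightarrow> UA A \<in> sets M"
proof -
  assume "mean_extension \<mu> M"
  then have "sets M = beta_borel_sets" unfolding mean_extension_def by blast
  moreover have "openin beta_top (UA A)"
    unfolding beta_top_def openin_topology_generated_by_iff by (rule generate_topology_on.Basis) simp
  ultimately show ?thesis unfolding beta_borel_sets_def by (auto intro: sigma_sets.Basic)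
qed

theorem lemma4p4:
  fixes T W :: "'a::countable \<Rightarrow> 'a \<Rightarrow> bool"
    and \<mu> :: "'a set \<Rightarrow> real"
    and M :: "'a set set measure"
    and l :: nat
  assumes "infinite (UNIV :: 'a set)"
    and "is_graph T" and "bounded_degree T"
    and "invariant_mean T \<mu>"
    and "mean_extension \<mu> M"
    and "is_graph W" and "\<forall>x y. W x y \<longrightarrow> T x y"
    and "l \<ge> 1"
  shows "{\<omega> \<in> betaX. comp_size_eq (GW W) l \<omega>} \<in> sets M \<and>
         \<mu> {x. comp_size_eq W l x} = measure M {\<omega> \<in> betaX. comp_size_eq (GW W) l \<omega>}"
proof -
  have "bounded_degree W" using bounded_degree_subgraph assms(3,7) by blast
  then obtain S where "gen_action S" "schreier S = W"
    using schreier_exists[OF assms(6)] by blast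
  then have clopen: "{\<omega> \<in> betaX. comp_size_eq (GW W) l \<omega>} = UA {x. comp_size_eq W l x}"
    by (rule comp_size_eq_GW_UA)
  have "measure M (UA {x. comp_size_eq W l x}) = \<mu> {x. comp_size_eq W l x}"
    using assms(5) unfolding mean_extension_def by blast
  then show ?thesis unfolding clopen using UA_in_sets[OF assms(5)] by simp
qed

end
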